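(* Let $\mathscr X=[0,1]^2$ with the Euclidean norm $\|\cdot\|_2$. Let $\mathbf x_1=(1/2,1/2)$ and, for $n\ge1$, let $\mathbf x_{n+1}$ be any point of $\mathrm{Arg}\max_{\mathbf x\in\mathscr X}\min_{1\le i\le n}\|\mathbf x-\mathbf x_i\|_2$, with $\mathbf X_n=\{\mathbf x_1,\ldots,\mathbf x_n\}$. For $n\ge5$ let $m=m(n)=\lfloor\log_2(\sqrt{n/2-1/4}-1/2)\rfloor$, and set $\gamma_m=2^{-m}$, $n_m=(2^m+1)^2+4^m$, $k_m=(2^{m+1}+1)^2$. Then: - for $n=n_m$: $\mathsf{SR}(\mathbf X_n)=\gamma_m\sqrt2/4$, $\mathsf{CR}(\mathbf X_n)=\gamma_m/2$, $\mathsf{MR}(\mathbf X_n)=\sqrt2$; - for $n=n_m+1,\ldots,k_m-1$: $\mathsf{SR}(\mathbf X_n)=\gamma_m/4$, $\mathsf{CR}(\mathbf X_n)=\gamma_m/2$, $\mathsf{MR}(\mathbf X_n)=2$; - for $n=k_m$: $\mathsf{SR}(\mathbf X_n)=\gamma_m/4$, $\mathsf{CR}(\mathbf X_n)=\gamma_m\sqrt2/4$, $\mathsf{MR}(\mathbf X_n)=\sqrt2$; - for $n=k_m+1,\ldots,n_{m+1}-1$: $\mathsf{SR}(\mathbf X_n)=\gamma_m\sqrt2/8$, $\mathsf{CR}(\mathbf X_n)=\gamma_m\sqrt2/4$, $\mathsf{MR}(\mathbf X_n)=2$.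
   Context: Fill distance $\mathsf{CR}(\mathbf X_n)=\sup_{\mathbf x\in\mathscr X}\min_{i\le n}\|\mathbf x-\mathbf x_i\|_2$; separation radius $\mathsf{SR}(\mathbf X_n)=\tfrac12\min_{i\ne j\le n}\|\mathbf x_i-\mathbf x_j\|_2$; mesh-ratio $\mathsf{MR}(\mathbf X_n)=\mathsf{CR}(\mathbf X_n)/\mathsf{SR}(\mathbf X_n)$. The integer $m(n)$ is the unique integer with $n_m\le n<n_{m+1}$. *)

theory Defs
  imports "HOL-Analysis.Analysis"
begin

text \<open>The design space [0,1]^2, points as pairs of reals (norm on real \<times> real is Euclidean).\<close>
definition unit_square :: "(real \<times> real) set" where
  "unit_square = {0..1} \<times> {0..1}"

definition CR :: "(real \<times> real) set \<Rightarrow> (real \<times> real) set \<Rightarrow> real" where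
  "CR D X = (SUP y\<in>D. Min ((\<lambda>p. dist y p) ` X))"

definition SR :: "(real \<times> real) set \<Rightarrow> real" where
  "SR X = Min {dist p q | p q. p \<in> X \<and> q \<in> X \<and> p \<noteq> q} / 2"

definition MR :: "(real \<times> real) set \<Rightarrow> (real \<times> real) set \<Rightarrow> real" where
  "MR D X = CR D X / SR X"

definition greedy_packing :: "(real \<times> real) set \<Rightarrow> (nat \<Rightarrow> real \<times> real) \<Rightarrow> bool" where
  "greedy_packing D x \<longleftrightarrow>
     (\<forall>n\<ge>1. x (Suc n) \<in> D \<and>
        (\<forall>y\<in>D. Min ((\<lambda>i. dist y (x i)) ` {1..n}) \<le> Min ((\<lambda>i. dist (x (Suc n)) (x i)) ` {1..n})))"

definition n_seq :: "nat \<Rightarrow> nat" where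
  "n_seq m = (2^m + 1)^2 + 4^m"

definition k_seq :: "nat \<Rightarrow> nat" where
  "k_seq m = (2^(m+1) + 1)^2"

end

theory Submission
  imports Defs
begin

(* Put N = 2^(m+1). The greedy points fill, level by level, the checkerboard
   checkerboard N = {(a/N, b/N) : 0 <= a, b <= N, a + b even} (the first n_m points) and the square
   lattice N = {(a/N, b/N) : 0 <= a, b <= N} (the first k_m points); lattice N is the even-even part
   of checkerboard (2N). Each level is forced by one invariant: if the points chosen so far, A, are
   within r of every point of the square, at distance exactly r only from points of some B containing
   A, and the points of B - A are r-separated within B, then the greedy rule picks the points of
   B - A next, in some order. The checkerboard covers with radius 1/N, with equality only on the
   lattice, which is 1/N-separated; the even-even part of the grid of mesh 1/(2N) covers with radius
   sqrt 2/(2N), with equality only at odd-odd points, and checkerboard (2N) is sqrt 2/(2N)-separated.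
   The same covering and separation facts, plus a nearest neighbour at the separation distance,
   give CR and SR of every set lying between two consecutive levels. *)

section \<open>Greedy packing, fill distance and separation radius\<close>

lemma Min_dist_eq_infdist:
  "finite A \<Longrightarrow> A \<noteq> {} \<Longrightarrow> Min ((\<lambda>a. dist x a) ` A) = infdist x A"
  by (simp add: infdist_notempty cInf_eq_Min)

lemma le_infdist: "A \<noteq> {} \<Longrightarrow> (\<And>a. a \<in> A \<Longrightarrow> c \<le> dist x a) \<Longrightarrow> c \<le> infdist x A"
  by (simp add: infdist_notempty cINF_greatest)

lemma CR_eq_SUP_infdist: "finite X \<Longrightarrow> X \<noteq> {} \<Longrightarrow> CR D X = (SUP y\<in>D. infdist y X)"
  by (simp add: CR_def Min_dist_eq_infdist)

lemma greedy_packingD: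
  assumes "greedy_packing D x" and "1 \<le> n"
  shows "x (Suc n) \<in> D" and "y \<in> D \<Longrightarrow> infdist y (x ` {1..n}) \<le> infdist (x (Suc n)) (x ` {1..n})"
proof -
  have eq: "Min ((\<lambda>i. dist z (x i)) ` {1..n}) = infdist z (x ` {1..n})" for z
    using Min_dist_eq_infdist[of "x ` {1..n}" z] \<open>1 \<le> n\<close> by (simp add: image_image)
  have "x (Suc n) \<in> D \<and> (\<forall>y\<in>D. Min ((\<lambda>i. dist y (x i)) ` {1..n})
          \<le> Min ((\<lambda>i. dist (x (Suc n)) (x i)) ` {1..n}))"
    using assms unfolding greedy_packing_def by blast
  then show "x (Suc n) \<in> D" and "y \<in> D \<Longrightarrow> infdist y (x ` {1..n}) \<le> infdist (x (Suc n)) (x ` {1..n})"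
    unfolding eq by blast+
qed

lemma greedy_packing_fills:
  assumes greedy: "greedy_packing D x" and "finite B" and "A \<subseteq> B" and "B \<subseteq> D" and "r > 0"
    and cover: "\<And>y. y \<in> D \<Longrightarrow> \<exists>a\<in>A. dist y a \<le> r \<and> (dist y a < r \<or> y \<in> B)"
    and sep: "\<And>p q. p \<in> B - A \<Longrightarrow> q \<in> B \<Longrightarrow> q \<noteq> p \<Longrightarrow> r \<le> dist p q"
    and prefix: "x ` {1..card A} = A" and "A \<noteq> {}"
    and "card A \<le> n" and "n \<le> card B"
  shows "A \<subseteq> x ` {1..n} \<and> x ` {1..n} \<subseteq> B \<and> card (x ` {1..n}) = n"
  using \<open>card A \<le> n\<close> \<open>n \<le> card B\<close>
proof (induction n rule: dec_induct)
  case base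
  then show ?case using prefix \<open>A \<subseteq> B\<close> by auto
next
  case (step n)
  let ?X = "x ` {1..n}" and ?x = "x (Suc n)"
  have IH: "A \<subseteq> ?X" "?X \<subseteq> B" "card ?X = n" using step by auto
  have "finite A" using \<open>A \<subseteq> B\<close> \<open>finite B\<close> by (rule finite_subset)
  then have "0 < card A" using \<open>A \<noteq> {}\<close> by (simp add: card_gt_0_iff)
  then have "1 \<le> n" using \<open>card A \<le> n\<close> by linarith
  have "?X \<noteq> {}" using IH(1) \<open>A \<noteq> {}\<close> by blast
  have "?X \<noteq> B" using IH(3) \<open>Suc n \<le> card B\<close> by auto
  then obtain p where p: "p \<in> B" "p \<notin> ?X" using IH(2) by blast
  \<comment> \<open>An unused point of \<open>B\<close> is still \<open>r\<close>-far from the prefix, hence so is the greedy choice,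
    and by the covering hypothesis a point that far from \<open>A\<close> lies in \<open>B\<close>.\<close>
  have "r \<le> infdist p ?X"
    using IH p \<open>?X \<noteq> {}\<close> by (intro le_infdist sep) auto
  also have "\<dots> \<le> infdist ?x ?X"
    using greedy_packingD(2)[OF greedy \<open>1 \<le> n\<close>, of p] p \<open>B \<subseteq> D\<close> by blast
  finally have far: "r \<le> infdist ?x ?X" .
  obtain a where "a \<in> A" "dist ?x a < r \<or> ?x \<in> B"
    using cover[OF greedy_packingD(1)[OF greedy \<open>1 \<le> n\<close>]] by blast
  moreover have "infdist ?x ?X \<le> dist ?x a"
    using IH(1) \<open>a \<in> A\<close> by (intro infdist_le) auto
  ultimately have "?x \<in> B" using far by linarith
  have "?x \<notin> ?X"
    using far \<open>r > 0\<close> infdist_zero[of ?x ?X] by linarith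
  then have "card (insert ?x ?X) = Suc n"
    using IH(3) card_insert_disjoint[OF finite_imageI[OF finite_atLeastAtMost]] by metis
  moreover have "x ` {1..Suc n} = insert ?x ?X"
    by (auto simp: atLeastAtMostSuc_conv)
  ultimately show ?case using IH(1,2) \<open>?x \<in> B\<close> by (metis insert_subset subset_insertI2)
qed

lemma greedy_packing_fills_all:
  assumes "greedy_packing D x" and "finite B" and "A \<subseteq> B" and "B \<subseteq> D" and "r > 0"
    and "\<And>y. y \<in> D \<Longrightarrow> \<exists>a\<in>A. dist y a \<le> r \<and> (dist y a < r \<or> y \<in> B)"
    and "\<And>p q. p \<in> B - A \<Longrightarrow> q \<in> B \<Longrightarrow> q \<noteq> p \<Longrightarrow> r \<le> dist p q"
    and "x ` {1..card A} = A" and "A \<noteq> {}"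
  shows "x ` {1..card B} = B"
proof -
  have "card A \<le> card B" using assms(2,3) by (rule card_mono)
  then have "x ` {1..card B} \<subseteq> B" "card (x ` {1..card B}) = card B"
    using greedy_packing_fills[OF assms _ order_refl] by auto
  then show ?thesis using assms(2) by (metis card_subset_eq)
qed

lemma CR_eqI:
  assumes "finite B" and "A \<subseteq> X" and "X \<subseteq> B" and "B \<subseteq> D" and "X \<noteq> B" and "A \<noteq> {}"
    and cover: "\<And>y. y \<in> D \<Longrightarrow> \<exists>a\<in>A. dist y a \<le> r"
    and sep: "\<And>p q. p \<in> B - A \<Longrightarrow> q \<in> B \<Longrightarrow> q \<noteq> p \<Longrightarrow> r \<le> dist p q"
  shows "CR D X = r"
proof -
  have "finite X" "X \<noteq> {}" using assms(1-3,6) finite_subset by auto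
  have le: "infdist y X \<le> r" if "y \<in> D" for y
    using cover[OF that] \<open>A \<subseteq> X\<close> by (meson infdist_le2 subsetD)
  obtain p where p: "p \<in> B" "p \<notin> X" using \<open>X \<subseteq> B\<close> \<open>X \<noteq> B\<close> by blast
  have "r \<le> infdist p X"
    using p assms(2,3) \<open>X \<noteq> {}\<close> by (intro le_infdist sep) auto
  moreover have "p \<in> D" using p \<open>B \<subseteq> D\<close> by auto
  moreover have "bdd_above ((\<lambda>y. infdist y X) ` D)" using le by (intro bdd_aboveI2)
  ultimately have "r \<le> (SUP y\<in>D. infdist y X)" by (meson cSUP_upper2)
  moreover have "(SUP y\<in>D. infdist y X) \<le> r" using le \<open>p \<in> D\<close> by (intro cSUP_least) auto
  ultimately have "(SUP y\<in>D. infdist y X) = r" by linarith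
  then show ?thesis by (simp add: CR_eq_SUP_infdist[OF \<open>finite X\<close> \<open>X \<noteq> {}\<close>])
qed

lemma SR_eqI:
  assumes "finite X" and "\<And>p q. p \<in> X \<Longrightarrow> q \<in> X \<Longrightarrow> p \<noteq> q \<Longrightarrow> d \<le> dist p q"
    and "p \<in> X" "q \<in> X" "p \<noteq> q" "dist p q = d"
  shows "SR X = d / 2"
proof -
  let ?S = "{dist p q | p q. p \<in> X \<and> q \<in> X \<and> p \<noteq> q}"
  have "?S \<subseteq> (\<lambda>(p, q). dist p q) ` (X \<times> X)" by auto
  then have "finite ?S" using \<open>finite X\<close> finite_subset by blast
  moreover have "d \<in> ?S" using assms(3-6) by blast
  moreover have "d \<le> s" if "s \<in> ?S" for s using that assms(2) by auto
  ultimately have "Min ?S = d" by (intro Min_eqI)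
  then show ?thesis unfolding SR_def by simp
qed

section \<open>Grids in the unit square\<close>

definition grid_point :: "nat \<Rightarrow> int \<Rightarrow> int \<Rightarrow> real \<times> real" where
  "grid_point N a b = (of_int a / real N, of_int b / real N)"

definition grid :: "nat \<Rightarrow> (int \<Rightarrow> int \<Rightarrow> bool) \<Rightarrow> (real \<times> real) set" where
  "grid N P = {grid_point N a b | a b. 0 \<le> a \<and> a \<le> int N \<and> 0 \<le> b \<and> b \<le> int N \<and> P a b}"

definition lattice :: "nat \<Rightarrow> (real \<times> real) set" where
  "lattice N = grid N (\<lambda>_ _. True)"

definition checkerboard :: "nat \<Rightarrow> (real \<times> real) set" where
  "checkerboard N = grid N (\<lambda>a b. even (a + b))"

lemma grid_point_eq_iff:
  "N > 0 \<Longrightarrow> grid_point N a b = grid_point N c d \<longleftrightarrow> a = c \<and> b = d"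
  by (simp add: grid_point_def)

lemma grid_pointI:
  "0 \<le> a \<Longrightarrow> a \<le> int N \<Longrightarrow> 0 \<le> b \<Longrightarrow> b \<le> int N \<Longrightarrow> P a b \<Longrightarrow> grid_point N a b \<in> grid N P"
  unfolding grid_def by blast

lemma grid_mono: "(\<And>a b. P a b \<Longrightarrow> Q a b) \<Longrightarrow> grid N P \<subseteq> grid N Q"
  unfolding grid_def by blast

lemma grid_disj: "grid N (\<lambda>a b. P a b \<or> Q a b) = grid N P \<union> grid N Q"
  unfolding grid_def by blast

lemma grid_eq_image:
  "grid N P = (\<lambda>(a, b). grid_point N a b) ` {(a, b). 0 \<le> a \<and> a \<le> int N \<and> 0 \<le> b \<and> b \<le> int N \<and> P a b}"
  unfolding grid_def by auto

lemma finite_grid: "finite (grid N P)"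
proof -
  have "{(a, b). 0 \<le> a \<and> a \<le> int N \<and> 0 \<le> b \<and> b \<le> int N \<and> P a b} \<subseteq> {0..int N} \<times> {0..int N}"
    by auto
  then show ?thesis unfolding grid_eq_image by (meson finite_SigmaI finite_atLeastAtMost_int finite_imageI finite_subset)
qed

lemma card_grid_product:
  assumes "N > 0"
  shows "card (grid N (\<lambda>a b. P a \<and> Q b))
    = card {a. 0 \<le> a \<and> a \<le> int N \<and> P a} * card {b. 0 \<le> b \<and> b \<le> int N \<and> Q b}"
proof -
  have "inj_on (\<lambda>(a, b). grid_point N a b) S" for S
    using assms by (auto simp: inj_on_def grid_point_eq_iff)
  moreover have "{(a, b). 0 \<le> a \<and> a \<le> int N \<and> 0 \<le> b \<and> b \<le> int N \<and> P a \<and> Q b}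
      = {a. 0 \<le> a \<and> a \<le> int N \<and> P a} \<times> {b. 0 \<le> b \<and> b \<le> int N \<and> Q b}"
    by auto
  ultimately show ?thesis unfolding grid_eq_image by (simp add: card_image card_cartesian_product)
qed

lemma grid_subset_unit_square: "N > 0 \<Longrightarrow> grid N P \<subseteq> unit_square"
  unfolding grid_def grid_point_def unit_square_def by auto

lemma dist_grid_point:
  assumes "N > 0"
  shows "dist (u, v) (grid_point N a b) = sqrt ((N * u - a)\<^sup>2 + (N * v - b)\<^sup>2) / N"
proof -
  have "(u - a / N)\<^sup>2 + (v - b / N)\<^sup>2 = ((N * u - a)\<^sup>2 + (N * v - b)\<^sup>2) / N\<^sup>2"
    using assms by (simp add: field_simps power2_eq_square)
  then show ?thesis
    using assms by (simp add: grid_point_def dist_Pair_Pair dist_real_def real_sqrt_divide)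
qed

lemma dist_grid_points:
  "N > 0 \<Longrightarrow> dist (grid_point N a b) (grid_point N c d) = sqrt (of_int ((a - c)\<^sup>2 + (b - d)\<^sup>2)) / N"
  by (simp add: dist_grid_point[of N] grid_point_def[of N a b])

lemma lattice_eq_grid_even:
  "lattice N = grid (2 * N) (\<lambda>a b. even a \<and> even b)"
proof (intro subset_antisym subsetI)
  have double: "grid_point N a b = grid_point (2 * N) (2 * a) (2 * b)" for a b
    by (simp add: grid_point_def)
  fix p
  show "p \<in> grid (2 * N) (\<lambda>a b. even a \<and> even b)" if p: "p \<in> lattice N"
  proof -
    obtain a b where "p = grid_point N a b" "0 \<le> a" "a \<le> int N" "0 \<le> b" "b \<le> int N"
      using p unfolding lattice_def grid_def by blast
    then show ?thesis unfolding double by (simp add: grid_pointI)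
  qed
  show "p \<in> lattice N" if p: "p \<in> grid (2 * N) (\<lambda>a b. even a \<and> even b)"
  proof -
    obtain a b where "p = grid_point (2 * N) (2 * a) (2 * b)"
      "0 \<le> 2 * a" "2 * a \<le> 2 * int N" "0 \<le> 2 * b" "2 * b \<le> 2 * int N"
      using p unfolding grid_def by (auto elim!: evenE)
    then show ?thesis unfolding lattice_def double[symmetric] by (simp add: grid_pointI)
  qed
qed

lemma card_even_upto: "card {a::int. 0 \<le> a \<and> a \<le> 2 * int K \<and> even a} = K + 1"
proof -
  have "{a::int. 0 \<le> a \<and> a \<le> 2 * int K \<and> even a} = (\<lambda>i. 2 * i) ` {0..int K}"
    by (auto elim!: evenE)
  moreover have "inj_on (\<lambda>i::int. 2 * i) {0..int K}" by (simp add: inj_on_def)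
  ultimately show ?thesis by (simp add: card_image)
qed

lemma card_odd_upto: "card {a::int. 0 \<le> a \<and> a \<le> 2 * int K \<and> odd a} = K"
proof -
  have "{a::int. 0 \<le> a \<and> a \<le> 2 * int K \<and> odd a} = (\<lambda>i. 2 * i + 1) ` {0..<int K}"
    by (auto elim!: oddE)
  moreover have "inj_on (\<lambda>i::int. 2 * i + 1) {0..<int K}" by (simp add: inj_on_def)
  ultimately show ?thesis by (simp add: card_image)
qed

lemma card_lattice:
  assumes "N > 0"
  shows "card (lattice N) = (N + 1)\<^sup>2"
proof -
  have "{a. 0 \<le> a \<and> a \<le> int N} = {0..int N}" by auto
  then have "card {a. 0 \<le> a \<and> a \<le> int N} = N + 1" by (simp add: nat_add_distrib)
  then show ?thesis
    using card_grid_product[OF assms, of "\<lambda>_. True" "\<lambda>_. True"] by (simp add: lattice_def power2_eq_square)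
qed

lemma card_checkerboard_double:
  assumes "K > 0"
  shows "card (checkerboard (2 * K)) = (K + 1)\<^sup>2 + K\<^sup>2"
proof -
  let ?E = "grid (2 * K) (\<lambda>a b. even a \<and> even b)" and ?O = "grid (2 * K) (\<lambda>a b. odd a \<and> odd b)"
  have "checkerboard (2 * K) = grid (2 * K) (\<lambda>a b. (even a \<and> even b) \<or> (odd a \<and> odd b))"
    unfolding checkerboard_def by (rule arg_cong[where f = "grid _"]) auto
  also have "\<dots> = ?E \<union> ?O" by (rule grid_disj)
  finally have "checkerboard (2 * K) = ?E \<union> ?O" .
  moreover have "?E \<inter> ?O = {}"
    using assms by (auto simp: grid_def grid_point_eq_iff)
  moreover have "card ?E = (K + 1)\<^sup>2" "card ?O = K\<^sup>2"
    using assms by (simp_all add: card_grid_product card_even_upto card_odd_upto power2_eq_square)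
  ultimately show ?thesis by (simp add: card_Un_disjoint finite_grid)
qed

lemma one_le_sum_squares_int:
  assumes "(a, b) \<noteq> (c, d)"
  shows "1 \<le> (a - c)\<^sup>2 + (b - d :: int)\<^sup>2"
proof -
  have "1 \<le> z\<^sup>2" if "z \<noteq> 0" for z :: int
    using that by (simp add: int_one_le_iff_zero_less)
  then show ?thesis
    using assms by (metis add.commute add_increasing2 eq_iff_diff_eq_0 old.prod.inject zero_le_power2)
qed

lemma two_le_sum_squares_even:
  assumes "even (a + b)" "even (c + d)" "(a, b) \<noteq> (c, d)"
  shows "2 \<le> (a - c)\<^sup>2 + (b - d :: int)\<^sup>2"
proof -
  have four: "4 \<le> z\<^sup>2" if z: "even z" "z \<noteq> 0" for z :: int
  proof -
    obtain y where "z = 2 * y" "y \<noteq> 0" using z by (auto elim!: evenE)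
    then show ?thesis using one_le_sum_squares_int[of y 0 0 0] by (simp add: power_mult_distrib)
  qed
  have "even ((a - c) + (b - d))" using assms(1,2) by simp
  then consider "a = c" "even (b - d)" "b \<noteq> d" | "b = d" "even (a - c)" "a \<noteq> c" | "a \<noteq> c" "b \<noteq> d"
    using assms(3) by fastforce
  then show ?thesis
  proof cases
    case 1
    then show ?thesis using four[of "b - d"] by simp
  next
    case 2
    then show ?thesis using four[of "a - c"] by simp
  next
    case 3
    then show ?thesis using one_le_sum_squares_int[of a 0 c 0] one_le_sum_squares_int[of b 0 d 0] by simp
  qed
qed

lemma grid_separated:
  assumes "N > 0" "p \<in> grid N P" "q \<in> grid N P" "p \<noteq> q"
    and "\<And>a b c d. P a b \<Longrightarrow> P c d \<Longrightarrow> (a, b) \<noteq> (c, d) \<Longrightarrow> s \<le> (a - c)\<^sup>2 + (b - d)\<^sup>2"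
  shows "sqrt (of_int s) / N \<le> dist p q"
proof -
  obtain a b c d where "p = grid_point N a b" "q = grid_point N c d" "P a b" "P c d"
    using assms(2,3) unfolding grid_def by blast
  moreover have "(a, b) \<noteq> (c, d)" using assms(4) calculation by auto
  ultimately have "real_of_int s \<le> of_int ((a - c)\<^sup>2 + (b - d)\<^sup>2)"
    using assms(5) by (simp only: of_int_le_iff)
  then have "sqrt (of_int s) / N \<le> sqrt (of_int ((a - c)\<^sup>2 + (b - d)\<^sup>2)) / N"
    by (intro divide_right_mono real_sqrt_le_mono) auto
  then show ?thesis using \<open>p = _\<close> \<open>q = _\<close> assms(1) by (simp only: dist_grid_points)
qed

lemma lattice_separated:
  "N > 0 \<Longrightarrow> p \<in> lattice N \<Longrightarrow> q \<in> lattice N \<Longrightarrow> p \<noteq> q \<Longrightarrow> 1 / N \<le> dist p q"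
  using grid_separated[of N p "\<lambda>_ _. True" q 1] one_le_sum_squares_int by (simp add: lattice_def)

lemma checkerboard_separated:
  "N > 0 \<Longrightarrow> p \<in> checkerboard N \<Longrightarrow> q \<in> checkerboard N \<Longrightarrow> p \<noteq> q \<Longrightarrow> sqrt 2 / N \<le> dist p q"
  using grid_separated[of N p _ q 2] two_le_sum_squares_even by (simp add: checkerboard_def)

lemma checkerboard_neighbour:
  assumes "N > 0" "p \<in> lattice N - checkerboard N"
  shows "\<exists>q \<in> checkerboard N. dist p q = 1 / N"
proof -
  obtain a b where ab: "p = grid_point N a b" "0 \<le> a" "a \<le> int N" "0 \<le> b" "b \<le> int N" "odd (a + b)"
    using assms(2) unfolding lattice_def checkerboard_def grid_def by blast
  define a' where "a' = (if a < int N then a + 1 else a - 1)"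
  have "grid_point N a' b \<in> checkerboard N"
    unfolding checkerboard_def a'_def using ab assms(1) by (intro grid_pointI) auto
  moreover have "dist p (grid_point N a' b) = 1 / N"
    using ab assms(1) by (simp add: a'_def dist_grid_points)
  ultimately show ?thesis by blast
qed

lemma even_grid_neighbour:
  assumes "N > 0" "p \<in> checkerboard N - grid N (\<lambda>a b. even a \<and> even b)"
  shows "\<exists>q \<in> grid N (\<lambda>a b. even a \<and> even b). dist p q = sqrt 2 / N"
proof -
  obtain a b where ab: "p = grid_point N a b" "0 \<le> a" "a \<le> int N" "0 \<le> b" "b \<le> int N" "odd a" "odd b"
    using assms(2) unfolding checkerboard_def grid_def by auto
  then have "a \<noteq> 0" "b \<noteq> 0" by auto
  then have "1 \<le> a" "1 \<le> b" using ab by linarith+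
  then have "grid_point N (a - 1) (b - 1) \<in> grid N (\<lambda>a b. even a \<and> even b)"
    using ab by (intro grid_pointI) auto
  moreover have "dist p (grid_point N (a - 1) (b - 1)) = sqrt 2 / N"
    using ab assms(1) by (simp add: dist_grid_points)
  ultimately show ?thesis by blast
qed

section \<open>Coverings by grids\<close>

lemma unit_cell_index:
  fixes s :: real
  assumes "N > 0" "0 \<le> s" "s \<le> real N"
  obtains i :: int where "0 \<le> i" "i < int N" "of_int i \<le> s" "s \<le> of_int i + 1"
proof (cases "\<lfloor>s\<rfloor> < int N")
  case True
  then show ?thesis
    using assms(2) by (intro that[of "\<lfloor>s\<rfloor>"]) linarith+
next
  case False
  then have "s = real N" using assms(3) by linarith
  then show ?thesis
    using assms(1) by (intro that[of "int N - 1"]) auto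
qed

lemma parity_rounding:
  fixes s :: real
  assumes "N > 0" "0 \<le> s" "s \<le> real N"
  obtains a :: int where "0 \<le> a" "a \<le> int N" "even a = e" "\<bar>s - a\<bar> \<le> 1"
proof -
  obtain i where i: "0 \<le> i" "i < int N" "i \<le> s" "s \<le> i + 1"
    using unit_cell_index assms by blast
  show ?thesis
  proof (cases "even i = e")
    case True
    then show ?thesis using i by (intro that[of i]) auto
  next
    case False
    then show ?thesis using i by (intro that[of "i + 1"]) auto
  qed
qed

lemma unit_distance_to_int:
  fixes s :: real
  assumes "\<bar>s - of_int a\<bar> = 1"
  obtains a' :: int where "s = of_int a'" "even a' \<noteq> even a"
proof (cases "s \<ge> of_int a")
  case True
  then show ?thesis using assms by (intro that[of "a + 1"]) auto
next
  case False
  then show ?thesis using assms by (intro that[of "a - 1"]) auto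
qed

lemma sum_squares_unit_interval:
  assumes "0 \<le> \<alpha>" "\<alpha> \<le> (1::real)"
  shows "\<alpha>\<^sup>2 + (1 - \<alpha>)\<^sup>2 \<le> 1" and "\<alpha>\<^sup>2 + (1 - \<alpha>)\<^sup>2 = 1 \<Longrightarrow> \<alpha> = 0 \<or> \<alpha> = 1"
proof -
  have eq: "\<alpha>\<^sup>2 + (1 - \<alpha>)\<^sup>2 = 1 - 2 * (\<alpha> * (1 - \<alpha>))" by (simp add: power2_eq_square algebra_simps)
  moreover have "0 \<le> \<alpha> * (1 - \<alpha>)" using assms by simp
  ultimately show "\<alpha>\<^sup>2 + (1 - \<alpha>)\<^sup>2 \<le> 1" by linarith
  show "\<alpha> = 0 \<or> \<alpha> = 1" if "\<alpha>\<^sup>2 + (1 - \<alpha>)\<^sup>2 = 1"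
    using that eq by simp
qed

lemma grid_covering_of_rounding:
  assumes "N > 0" "y \<in> unit_square"
    and rounding: "\<And>s t. 0 \<le> s \<Longrightarrow> s \<le> real N \<Longrightarrow> 0 \<le> t \<Longrightarrow> t \<le> real N \<Longrightarrow>
      \<exists>a b. 0 \<le> a \<and> a \<le> int N \<and> 0 \<le> b \<and> b \<le> int N \<and> P a b \<and> (s - a)\<^sup>2 + (t - b)\<^sup>2 \<le> c \<and>
        ((s - a)\<^sup>2 + (t - b)\<^sup>2 = c \<longrightarrow> (\<exists>a' b'. s = of_int a' \<and> t = of_int b' \<and> Q a' b'))"
  shows "\<exists>p \<in> grid N P. dist y p \<le> sqrt c / N \<and> (dist y p < sqrt c / N \<or> y \<in> grid N Q)"
proof -
  obtain u v where y: "y = (u, v)" "0 \<le> u" "u \<le> 1" "0 \<le> v" "v \<le> 1"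
    using assms(2) unfolding unit_square_def by auto
  then have uv: "0 \<le> N * u" "N * u \<le> N" "0 \<le> N * v" "N * v \<le> N"
    by (simp_all add: mult_left_le)
  obtain a b where "0 \<le> a \<and> a \<le> int N \<and> 0 \<le> b \<and> b \<le> int N \<and> P a b \<and>
      (N * u - a)\<^sup>2 + (N * v - b)\<^sup>2 \<le> c \<and> ((N * u - a)\<^sup>2 + (N * v - b)\<^sup>2 = c \<longrightarrow>
      (\<exists>a' b'. N * u = of_int a' \<and> N * v = of_int b' \<and> Q a' b'))"
    using rounding[OF uv] by blast
  then have ab: "0 \<le> a" "a \<le> int N" "0 \<le> b" "b \<le> int N" "P a b"
      and le: "(N * u - a)\<^sup>2 + (N * v - b)\<^sup>2 \<le> c"
      and tie: "(N * u - a)\<^sup>2 + (N * v - b)\<^sup>2 = c \<Longrightarrow> \<exists>a' b'. N * u = of_int a' \<and> N * v = of_int b' \<and> Q a' b'"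
    by auto
  have p: "grid_point N a b \<in> grid N P" using ab by (rule grid_pointI)
  have dist: "dist y (grid_point N a b) = sqrt ((N * u - a)\<^sup>2 + (N * v - b)\<^sup>2) / N"
    using assms(1) y(1) by (simp add: dist_grid_point)
  show ?thesis
  proof (cases "(N * u - a)\<^sup>2 + (N * v - b)\<^sup>2 < c")
    case True
    then have "dist y (grid_point N a b) < sqrt c / N"
      unfolding dist using assms(1) by (simp add: divide_strict_right_mono)
    then show ?thesis by (intro bexI[OF _ p]) auto
  next
    case False
    then obtain a' b' where "N * u = of_int a'" "N * v = of_int b'" "Q a' b'"
      using le tie by fastforce
    moreover have "y = grid_point N a' b'"
      using calculation assms(1) y(1) by (simp add: grid_point_def field_simps)
    ultimately have "y \<in> grid N Q"
      using uv by (simp add: grid_pointI)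
    moreover have "dist y (grid_point N a b) \<le> sqrt c / N"
      unfolding dist using le assms(1) by (simp add: divide_right_mono)
    ultimately show ?thesis by (intro bexI[OF _ p]) auto
  qed
qed

lemma parity_class_rounding:
  fixes s t :: real
  assumes "N > 0" "0 \<le> s" "s \<le> real N" "0 \<le> t" "t \<le> real N"
  shows "\<exists>a b. 0 \<le> a \<and> a \<le> int N \<and> 0 \<le> b \<and> b \<le> int N \<and> (even a = e \<and> even b = e) \<and>
    (s - a)\<^sup>2 + (t - b)\<^sup>2 \<le> 2 \<and>
    ((s - a)\<^sup>2 + (t - b)\<^sup>2 = 2 \<longrightarrow> (\<exists>a' b'. s = of_int a' \<and> t = of_int b' \<and> (even a' \<noteq> e \<and> even b' \<noteq> e)))"
proof -
  obtain a where a: "0 \<le> a" "a \<le> int N" "even a = e" "\<bar>s - a\<bar> \<le> 1"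
    using parity_rounding assms(1-3) by blast
  obtain b where b: "0 \<le> b" "b \<le> int N" "even b = e" "\<bar>t - b\<bar> \<le> 1"
    using parity_rounding assms(1,4,5) by blast
  have "(s - a)\<^sup>2 \<le> 1" "(t - b)\<^sup>2 \<le> 1"
    using a(4) b(4) by (simp_all add: abs_square_le_1)
  moreover have "\<exists>a' b'. s = of_int a' \<and> t = of_int b' \<and> (even a' \<noteq> e \<and> even b' \<noteq> e)"
    if "(s - a)\<^sup>2 + (t - b)\<^sup>2 = 2"
  proof -
    have "\<bar>s - a\<bar> = 1" "\<bar>t - b\<bar> = 1"
      using that calculation by (simp_all add: abs_square_eq_1[symmetric])
    then obtain a' b' where "s = of_int a'" "even a' \<noteq> even a" "t = of_int b'" "even b' \<noteq> even b"
      by (metis unit_distance_to_int)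
    then show ?thesis using a(3) b(3) by blast
  qed
  ultimately show ?thesis using a(1-3) b(1-3) by (intro exI[of _ a] exI[of _ b]) auto
qed

lemma parity_class_covering:
  assumes "N > 0" "y \<in> unit_square"
  shows "\<exists>p \<in> grid N (\<lambda>a b. even a = e \<and> even b = e). dist y p \<le> sqrt 2 / N \<and>
    (dist y p < sqrt 2 / N \<or> y \<in> grid N (\<lambda>a b. even a \<noteq> e \<and> even b \<noteq> e))"
  using grid_covering_of_rounding[OF assms parity_class_rounding[OF assms(1)]] .

lemma checkerboard_rounding:
  fixes s t :: real
  assumes "N > 0" "0 \<le> s" "s \<le> real N" "0 \<le> t" "t \<le> real N"
  shows "\<exists>a b. 0 \<le> a \<and> a \<le> int N \<and> 0 \<le> b \<and> b \<le> int N \<and> even (a + b) \<and>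
    (s - a)\<^sup>2 + (t - b)\<^sup>2 \<le> 1 \<and> ((s - a)\<^sup>2 + (t - b)\<^sup>2 = 1 \<longrightarrow> (\<exists>a' b'. s = of_int a' \<and> t = of_int b'))"
proof -
  define d where "d a b = (s - of_int a)\<^sup>2 + (t - of_int b)\<^sup>2" for a b :: int
  obtain i where i: "0 \<le> i" "i < int N" "of_int i \<le> s" "s \<le> of_int i + 1"
    using unit_cell_index assms(1-3) by blast
  obtain j where j: "0 \<le> j" "j < int N" "of_int j \<le> t" "t \<le> of_int j + 1"
    using unit_cell_index assms(1,4,5) by blast
  define S where "S = (s - i)\<^sup>2 + (1 - (s - i))\<^sup>2 + ((t - j)\<^sup>2 + (1 - (t - j))\<^sup>2)"
  have "S \<le> 2" unfolding S_def
    using sum_squares_unit_interval(1)[of "s - i"] sum_squares_unit_interval(1)[of "t - j"] i j by simp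
  have tie: "\<exists>a' b'. s = of_int a' \<and> t = of_int b'" if "S = 2"
  proof -
    have "(s - i)\<^sup>2 + (1 - (s - i))\<^sup>2 = 1" "(t - j)\<^sup>2 + (1 - (t - j))\<^sup>2 = 1"
      using that sum_squares_unit_interval(1)[of "s - i"] sum_squares_unit_interval(1)[of "t - j"] i j
      unfolding S_def by simp_all
    moreover have "0 \<le> s - i" "s - i \<le> 1" "0 \<le> t - j" "t - j \<le> 1" using i j by simp_all
    ultimately have "s - i = 0 \<or> s - i = 1" "t - j = 0 \<or> t - j = 1"
      using sum_squares_unit_interval(2) by blast+
    then show ?thesis by (metis eq_iff_diff_eq_0 of_int_add of_int_1 diff_add_cancel add.commute)
  qed
  \<comment> \<open>The corners of the cell with even coordinate sum form a diagonal; the squared distances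
    to the two ends add up to \<open>S\<close>, so the nearer end is within distance 1.\<close>
  obtain a1 b1 a2 b2 where corners:
      "0 \<le> a1" "a1 \<le> int N" "0 \<le> b1" "b1 \<le> int N" "even (a1 + b1)"
      "0 \<le> a2" "a2 \<le> int N" "0 \<le> b2" "b2 \<le> int N" "even (a2 + b2)"
      and sum: "d a1 b1 + d a2 b2 = S"
  proof (cases "even (i + j)")
    case True
    then show ?thesis
      using i j by (intro that[of i j "i + 1" "j + 1"]) (auto simp: d_def S_def power2_eq_square algebra_simps)
  next
    case False
    then show ?thesis
      using i j by (intro that[of "i + 1" j i "j + 1"]) (auto simp: d_def S_def power2_eq_square algebra_simps)
  qed
  have closer: "d a b \<le> 1 \<and> (d a b = 1 \<longrightarrow> S = 2)" if "d a b \<le> d a' b'" "d a b + d a' b' = S" for a b a' b'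
    using that \<open>S \<le> 2\<close> by auto
  show ?thesis
  proof (cases "d a1 b1 \<le> d a2 b2")
    case True
    then show ?thesis using closer[OF True sum] corners(1-5) tie unfolding d_def by blast
  next
    case False
    then have "d a2 b2 \<le> d a1 b1" by simp
    then show ?thesis using closer[OF _ sum[unfolded add.commute[of "d a1 b1"]]] corners(6-10) tie
      unfolding d_def by blast
  qed
qed

lemma checkerboard_covering:
  assumes "N > 0" "y \<in> unit_square"
  shows "\<exists>p \<in> checkerboard N. dist y p \<le> 1 / N \<and> (dist y p < 1 / N \<or> y \<in> lattice N)"
  using grid_covering_of_rounding[OF assms, where P = "\<lambda>a b. even (a + b)" and Q = "\<lambda>_ _. True" and c = 1]
    checkerboard_rounding[OF assms(1)]
  unfolding checkerboard_def lattice_def by simp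

section \<open>Radii between consecutive levels\<close>

lemma checkerboard_subset_lattice: "checkerboard N \<subseteq> lattice N"
  unfolding checkerboard_def lattice_def by (rule grid_mono) simp

lemma even_grid_subset_checkerboard: "grid N (\<lambda>a b. even a \<and> even b) \<subseteq> checkerboard N"
  unfolding checkerboard_def by (rule grid_mono) simp

lemma odd_grid_subset_checkerboard: "grid N (\<lambda>a b. odd a \<and> odd b) \<subseteq> checkerboard N"
  unfolding checkerboard_def by (rule grid_mono) simp

lemma CR_between_checkerboard_lattice:
  assumes "N > 0" "checkerboard N \<subseteq> X" "X \<subseteq> lattice N" "X \<noteq> lattice N"
  shows "CR unit_square X = 1 / N"
proof (rule CR_eqI[OF _ assms(2,3) _ assms(4)])
  show "finite (lattice N)" "lattice N \<subseteq> unit_square"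
    using assms(1) by (simp_all add: lattice_def finite_grid grid_subset_unit_square)
  show "checkerboard N \<noteq> {}"
    using grid_pointI[of 0 N 0 "\<lambda>a b. even (a + b)"] unfolding checkerboard_def by auto
  show "\<exists>a\<in>checkerboard N. dist y a \<le> 1 / N" if "y \<in> unit_square" for y
    using checkerboard_covering[OF assms(1) that] by blast
  show "1 / N \<le> dist p q" if "p \<in> lattice N - checkerboard N" "q \<in> lattice N" "q \<noteq> p" for p q
    using lattice_separated[OF assms(1)] that by auto
qed

lemma SR_between_checkerboard_lattice:
  assumes "N > 0" "checkerboard N \<subseteq> X" "X \<subseteq> lattice N" "X \<noteq> checkerboard N"
  shows "SR X = 1 / (2 * N)"
proof -
  obtain p where p: "p \<in> X" "p \<in> lattice N - checkerboard N" using assms(2-4) by blast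
  obtain q where q: "q \<in> checkerboard N" "dist p q = 1 / N"
    using checkerboard_neighbour[OF assms(1) p(2)] by blast
  have "SR X = (1 / N) / 2"
  proof (rule SR_eqI[OF _ _ p(1) _ _ q(2)])
    show "finite X" using assms(3) finite_grid finite_subset unfolding lattice_def by blast
    show "1 / N \<le> dist a b" if "a \<in> X" "b \<in> X" "a \<noteq> b" for a b
      using lattice_separated[OF assms(1), of a b] that assms(3) by blast
  qed (use p q assms(2) in auto)
  then show ?thesis by simp
qed

lemma CR_between_even_grid_checkerboard:
  assumes "N > 0" "grid N (\<lambda>a b. even a \<and> even b) \<subseteq> X" "X \<subseteq> checkerboard N" "X \<noteq> checkerboard N"
  shows "CR unit_square X = sqrt 2 / N"
proof (rule CR_eqI[OF _ assms(2,3) _ assms(4)])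
  show "finite (checkerboard N)" "checkerboard N \<subseteq> unit_square"
    using assms(1) by (simp_all add: checkerboard_def finite_grid grid_subset_unit_square)
  show "grid N (\<lambda>a b. even a \<and> even b) \<noteq> {}"
    using grid_pointI[of 0 N 0 "\<lambda>a b. even a \<and> even b"] by auto
  show "\<exists>a\<in>grid N (\<lambda>a b. even a \<and> even b). dist y a \<le> sqrt 2 / N" if "y \<in> unit_square" for y
    using parity_class_covering[OF assms(1) that, of True] by auto
  show "sqrt 2 / N \<le> dist p q"
    if "p \<in> checkerboard N - grid N (\<lambda>a b. even a \<and> even b)" "q \<in> checkerboard N" "q \<noteq> p" for p q
    using checkerboard_separated[OF assms(1)] that by auto
qed

lemma SR_between_even_grid_checkerboard:
  assumes "N > 0" "grid N (\<lambda>a b. even a \<and> even b) \<subseteq> X" "X \<subseteq> checkerboard N"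
    "X \<noteq> grid N (\<lambda>a b. even a \<and> even b)"
  shows "SR X = sqrt 2 / (2 * N)"
proof -
  obtain p where p: "p \<in> X" "p \<in> checkerboard N - grid N (\<lambda>a b. even a \<and> even b)"
    using assms(2-4) by blast
  obtain q where q: "q \<in> grid N (\<lambda>a b. even a \<and> even b)" "dist p q = sqrt 2 / N"
    using even_grid_neighbour[OF assms(1) p(2)] by blast
  have "SR X = (sqrt 2 / N) / 2"
  proof (rule SR_eqI[OF _ _ p(1) _ _ q(2)])
    show "finite X" using assms(3) finite_grid finite_subset unfolding checkerboard_def by blast
    show "sqrt 2 / N \<le> dist a b" if "a \<in> X" "b \<in> X" "a \<noteq> b" for a b
      using checkerboard_separated[OF assms(1), of a b] that assms(3) by blast
  qed (use p q assms(2) in auto)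
  then show ?thesis by simp
qed

section \<open>The greedy sequence level by level\<close>

lemma greedy_checkerboard_to_lattice:
  assumes greedy: "greedy_packing unit_square x" and "N > 0"
    and prefix: "x ` {1..card (checkerboard N)} = checkerboard N"
    and "card (checkerboard N) \<le> n" "n \<le> card (lattice N)"
  shows "checkerboard N \<subseteq> x ` {1..n} \<and> x ` {1..n} \<subseteq> lattice N \<and> card (x ` {1..n}) = n"
proof (rule greedy_packing_fills[OF greedy _ checkerboard_subset_lattice _ _ _ _ prefix _ assms(4,5)])
  show "finite (lattice N)" "lattice N \<subseteq> unit_square" "0 < 1 / real N"
    using \<open>N > 0\<close> by (simp_all add: lattice_def finite_grid grid_subset_unit_square)
  show "\<exists>a\<in>checkerboard N. dist y a \<le> 1 / N \<and> (dist y a < 1 / N \<or> y \<in> lattice N)"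
    if "y \<in> unit_square" for y
    using checkerboard_covering[OF \<open>N > 0\<close> that] .
  show "1 / N \<le> dist p q" if "p \<in> lattice N - checkerboard N" "q \<in> lattice N" "q \<noteq> p" for p q
    using lattice_separated[OF \<open>N > 0\<close>] that by auto
  show "checkerboard N \<noteq> {}"
    using grid_pointI[of 0 N 0 "\<lambda>a b. even (a + b)"] unfolding checkerboard_def by auto
qed

lemma greedy_lattice_to_checkerboard:
  assumes greedy: "greedy_packing unit_square x" and "N > 0"
    and prefix: "x ` {1..card (lattice N)} = lattice N"
    and "card (lattice N) \<le> n" "n \<le> card (checkerboard (2 * N))"
  shows "lattice N \<subseteq> x ` {1..n} \<and> x ` {1..n} \<subseteq> checkerboard (2 * N) \<and> card (x ` {1..n}) = n"
proof (rule greedy_packing_fills[OF greedy _ _ _ _ _ _ prefix _ assms(4,5)])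
  have "2 * N > 0" using \<open>N > 0\<close> by simp
  show "finite (checkerboard (2 * N))" "checkerboard (2 * N) \<subseteq> unit_square" "0 < sqrt 2 / real (2 * N)"
    using \<open>2 * N > 0\<close> by (simp_all add: checkerboard_def finite_grid grid_subset_unit_square)
  show "lattice N \<subseteq> checkerboard (2 * N)"
    unfolding lattice_eq_grid_even by (rule even_grid_subset_checkerboard)
  show "\<exists>a\<in>lattice N. dist y a \<le> sqrt 2 / real (2 * N) \<and>
      (dist y a < sqrt 2 / real (2 * N) \<or> y \<in> checkerboard (2 * N))" if "y \<in> unit_square" for y
    using parity_class_covering[OF \<open>2 * N > 0\<close> that, of True] odd_grid_subset_checkerboard
    unfolding lattice_eq_grid_even by auto
  show "sqrt 2 / real (2 * N) \<le> dist p q"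
    if "p \<in> checkerboard (2 * N) - lattice N" "q \<in> checkerboard (2 * N)" "q \<noteq> p" for p q
    using checkerboard_separated[OF \<open>2 * N > 0\<close>] that by auto
  show "lattice N \<noteq> {}"
    using grid_pointI[of 0 N 0 "\<lambda>_ _. True"] unfolding lattice_def by auto
qed

lemma odd_grid_two: "grid 2 (\<lambda>a b. odd a \<and> odd b) = {(1/2, 1/2)}"
proof -
  have one: "a = 1" if "odd a" "0 \<le> a" "a \<le> 2" for a :: int
  proof -
    have "a = 0 \<or> a = 1 \<or> a = 2" using that(2,3) by linarith
    then show ?thesis using that(1) by auto
  qed
  have "grid 2 (\<lambda>a b. odd a \<and> odd b) = {grid_point 2 1 1}"
  proof (intro subset_antisym subsetI)
    fix p assume "p \<in> grid 2 (\<lambda>a b. odd a \<and> odd b)"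
    then obtain a b where "p = grid_point 2 a b" "0 \<le> a" "a \<le> 2" "0 \<le> b" "b \<le> 2" "odd a" "odd b"
      unfolding grid_def by auto
    then show "p \<in> {grid_point 2 1 1}" using one[of a] one[of b] by simp
  qed (auto intro: grid_pointI)
  then show ?thesis by (simp add: grid_point_def)
qed

lemma greedy_packing_first_checkerboard:
  assumes "x 1 = (1/2, 1/2)" and greedy: "greedy_packing unit_square x"
  shows "x ` {1..card (checkerboard 2)} = checkerboard 2"
proof (rule greedy_packing_fills_all[OF greedy, where A = "{(1/2, 1/2)}" and r = "sqrt 2 / 2"])
  show "finite (checkerboard 2)" "checkerboard 2 \<subseteq> unit_square"
    by (simp_all add: checkerboard_def finite_grid grid_subset_unit_square)
  show "{(1/2, 1/2)} \<subseteq> checkerboard 2"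
    using odd_grid_subset_checkerboard[of 2] by (simp add: odd_grid_two)
  show "\<exists>a\<in>{(1/2, 1/2)}. dist y a \<le> sqrt 2 / 2 \<and> (dist y a < sqrt 2 / 2 \<or> y \<in> checkerboard 2)"
    if "y \<in> unit_square" for y
    using parity_class_covering[of 2 y False] that even_grid_subset_checkerboard[of 2]
    by (auto simp: odd_grid_two)
  show "sqrt 2 / 2 \<le> dist p q" if "p \<in> checkerboard 2 - {(1/2, 1/2)}" "q \<in> checkerboard 2" "q \<noteq> p" for p q
    using checkerboard_separated[of 2] that by auto
qed (use assms(1) in auto)

lemma card_checkerboard_level: "card (checkerboard (2 ^ (m + 1))) = n_seq m"
proof -
  have "(2::nat) ^ m * 2 ^ m = 4 ^ m" by (simp add: power_mult_distrib[symmetric])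
  then show ?thesis using card_checkerboard_double[of "2 ^ m"] by (simp add: n_seq_def power2_eq_square)
qed

lemma card_lattice_level: "card (lattice (2 ^ (m + 1))) = k_seq m"
  using card_lattice[of "2 ^ (m + 1)"] by (simp add: k_seq_def)

lemma n_seq_less_k_seq: "n_seq m < k_seq m"
proof -
  have "(4::nat) ^ m = 2 ^ m * 2 ^ m" by (simp add: power_mult_distrib[symmetric])
  moreover have "0 < (2::nat) ^ m" by simp
  ultimately show ?thesis unfolding n_seq_def k_seq_def by (simp add: power2_eq_square algebra_simps)
qed

lemma k_seq_less_n_seq_Suc: "k_seq m < n_seq (m + 1)"
  by (simp add: n_seq_def k_seq_def)

lemma card_lattice_less_n_seq: "card (lattice (2 ^ m)) < n_seq m"
  by (simp add: card_lattice n_seq_def)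

lemma greedy_packing_levels:
  assumes "x 1 = (1/2, 1/2)" and greedy: "greedy_packing unit_square x"
  shows "x ` {1..n_seq m} = checkerboard (2 ^ (m + 1)) \<and> x ` {1..k_seq m} = lattice (2 ^ (m + 1))"
proof -
  have to_lattice: "x ` {1..k_seq m} = lattice (2 ^ (m + 1))"
    if "x ` {1..n_seq m} = checkerboard (2 ^ (m + 1))" for m
  proof -
    have "x ` {1..k_seq m} \<subseteq> lattice (2 ^ (m + 1))" "card (x ` {1..k_seq m}) = k_seq m"
      using greedy_checkerboard_to_lattice[OF greedy, of "2 ^ (m + 1)" "k_seq m",
          unfolded card_checkerboard_level card_lattice_level] that n_seq_less_k_seq[of m]
      by simp_all
    then show ?thesis
      using card_lattice_level[of m] by (metis card_subset_eq finite_grid lattice_def)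
  qed
  have "x ` {1..n_seq m} = checkerboard (2 ^ (m + 1))"
  proof (induction m)
    case 0
    show ?case using greedy_packing_first_checkerboard[OF assms] card_checkerboard_level[of 0] by simp
  next
    case (Suc m)
    have "x ` {1..n_seq (m + 1)} \<subseteq> checkerboard (2 * 2 ^ (m + 1))" "card (x ` {1..n_seq (m + 1)}) = n_seq (m + 1)"
      using greedy_lattice_to_checkerboard[OF greedy, of "2 ^ (m + 1)" "n_seq (m + 1)",
          unfolded card_lattice_level] to_lattice[OF Suc.IH]
        k_seq_less_n_seq_Suc[of m] card_checkerboard_level[of "m + 1"]
      by simp_all
    then show ?case
      using card_checkerboard_level[of "Suc m"] by (metis card_subset_eq finite_grid checkerboard_def power_Suc Suc_eq_plus1)
  qed
  with to_lattice show ?thesis by blast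
qed

lemma greedy_packing_radii_checkerboard_stage:
  assumes "x 1 = (1/2, 1/2)" and greedy: "greedy_packing unit_square x"
    and "n_seq m \<le> n" "n < k_seq m"
  defines "N \<equiv> (2::nat) ^ (m + 1)" and "X \<equiv> x ` {1..n}"
  shows "CR unit_square X = 1 / N \<and> SR X = (if n = n_seq m then sqrt 2 / (2 * N) else 1 / (2 * N))"
proof -
  have "N > 0" unfolding N_def by simp
  have X: "checkerboard N \<subseteq> X" "X \<subseteq> lattice N" "card X = n"
    using greedy_checkerboard_to_lattice[OF greedy \<open>N > 0\<close>, of n] greedy_packing_levels[OF assms(1,2), of m]
      assms(3,4) unfolding X_def N_def card_checkerboard_level card_lattice_level by simp_all
  have "X \<noteq> lattice N" using X(3) assms(4) card_lattice_level[of m] unfolding N_def by auto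
  then have CR: "CR unit_square X = 1 / N" by (rule CR_between_checkerboard_lattice[OF \<open>N > 0\<close> X(1,2)])
  show ?thesis
  proof (cases "n = n_seq m")
    case True
    have "finite X" using X(2) finite_subset finite_grid unfolding lattice_def by blast
    have "card (checkerboard N) = n_seq m" unfolding N_def by (rule card_checkerboard_level)
    then have "card (checkerboard N) = card X" using X(3) True by linarith
    then have "X = checkerboard N" using card_subset_eq[OF \<open>finite X\<close> X(1)] by simp
    moreover have "grid N (\<lambda>a b. even a \<and> even b) = lattice (2 ^ m)"
      unfolding N_def by (simp add: lattice_eq_grid_even)
    moreover have "X \<noteq> lattice (2 ^ m)" using X(3) True card_lattice_less_n_seq[of m] by auto
    ultimately have "SR X = sqrt 2 / (2 * N)"
      using SR_between_even_grid_checkerboard[OF \<open>N > 0\<close> even_grid_subset_checkerboard] by simp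
    then show ?thesis using CR True by simp
  next
    case False
    then have "X \<noteq> checkerboard N" using X(3) card_checkerboard_level[of m] unfolding N_def by auto
    then show ?thesis using CR False SR_between_checkerboard_lattice[OF \<open>N > 0\<close> X(1,2)] by simp
  qed
qed

lemma greedy_packing_radii_lattice_stage:
  assumes "x 1 = (1/2, 1/2)" and greedy: "greedy_packing unit_square x"
    and "k_seq m \<le> n" "n < n_seq (m + 1)"
  defines "N \<equiv> (2::nat) ^ (m + 1)" and "X \<equiv> x ` {1..n}"
  shows "CR unit_square X = sqrt 2 / (2 * N) \<and>
    SR X = (if n = k_seq m then 1 / (2 * N) else sqrt 2 / (4 * N))"
proof -
  have "N > 0" "2 * N > 0" unfolding N_def by simp_all
  have "card (checkerboard (2 * N)) = n_seq (m + 1)"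
    using card_checkerboard_level[of "m + 1"] unfolding N_def by simp
  then have X: "lattice N \<subseteq> X" "X \<subseteq> checkerboard (2 * N)" "card X = n"
    using greedy_lattice_to_checkerboard[OF greedy \<open>N > 0\<close>, of n] greedy_packing_levels[OF assms(1,2), of m]
      assms(3,4) unfolding X_def N_def card_lattice_level by simp_all
  have even_grid: "grid (2 * N) (\<lambda>a b. even a \<and> even b) = lattice N" by (simp add: lattice_eq_grid_even)
  have "X \<noteq> checkerboard (2 * N)" using X(3) assms(4) \<open>card (checkerboard (2 * N)) = _\<close> by auto
  then have CR: "CR unit_square X = sqrt 2 / (2 * N)"
    using CR_between_even_grid_checkerboard[OF \<open>2 * N > 0\<close>] X(1,2) unfolding even_grid by simp
  show ?thesis
  proof (cases "n = k_seq m")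
    case True
    have "card (lattice N) = k_seq m" unfolding N_def by (rule card_lattice_level)
    then have "card (lattice N) = card X" using X(3) True by linarith
    moreover have "finite X" using X(2) finite_subset finite_grid unfolding checkerboard_def by blast
    ultimately have "X = lattice N" using card_subset_eq[OF _ X(1)] by simp
    moreover have "X \<noteq> checkerboard N"
      using X(3) True n_seq_less_k_seq[of m] card_checkerboard_level[of m] unfolding N_def by auto
    ultimately show ?thesis
      using CR True SR_between_checkerboard_lattice[OF \<open>N > 0\<close> checkerboard_subset_lattice] by simp
  next
    case False
    then have "X \<noteq> lattice N" using X(3) card_lattice_level[of m] unfolding N_def by auto
    then have "SR X = sqrt 2 / (2 * (2 * N))"
      using SR_between_even_grid_checkerboard[OF \<open>2 * N > 0\<close>] X(1,2) unfolding even_grid by simp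
    then show ?thesis using CR False by simp
  qed
qed

lemma real_n_seq: "real (n_seq m) = 2 * (2 ^ m)\<^sup>2 + 2 * 2 ^ m + 1"
proof -
  have "(4::nat) ^ m = (2 ^ m)\<^sup>2" by (simp add: power_mult_distrib[symmetric] power2_eq_square)
  then show ?thesis unfolding n_seq_def by (simp add: power2_eq_square algebra_simps)
qed

lemma n_seq_floor_log_bracket:
  assumes "n \<ge> 5"
  defines "m \<equiv> nat \<lfloor>log 2 (sqrt (real n / 2 - 1/4) - 1/2)\<rfloor>"
  shows "n_seq m \<le> n \<and> n < n_seq (m + 1)"
proof -
  define z where "z = sqrt (real n / 2 - 1/4) - 1/2"
  define t :: real where "t = 2 ^ m"
  \<comment> \<open>Both \<open>n\<close> and \<open>n_seq m\<close> are values of \<open>w \<mapsto> 2 w\<^sup>2 + 2 w + 1\<close>, at \<open>w = z\<close> and at \<open>w = t\<close>;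
    the floor of the logarithm gives \<open>t \<le> z < 2 t\<close>.\<close>
  have "(z + 1/2)\<^sup>2 = real n / 2 - 1/4" unfolding z_def using assms(1) by simp
  then have n: "real n = 2 * z\<^sup>2 + 2 * z + 1" by (simp add: power2_eq_square algebra_simps)
  have "3/2 \<le> sqrt (real n / 2 - 1/4)" using assms(1) by (intro real_le_rsqrt) (simp add: power2_eq_square)
  then have "1 \<le> z" unfolding z_def by simp
  then have "0 \<le> \<lfloor>log 2 z\<rfloor>" by simp
  then have "2 powr real_of_int \<lfloor>log 2 z\<rfloor> = t" "2 powr real_of_int (\<lfloor>log 2 z\<rfloor> + 1) = 2 * t"
    unfolding t_def m_def z_def[symmetric] by (simp_all add: powr_realpow[symmetric] powr_add)
  then have "t \<le> z" "z < 2 * t"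
    using floor_log_eq_powr_iff[of z 2 "\<lfloor>log 2 z\<rfloor>"] \<open>1 \<le> z\<close> by simp_all
  moreover have "0 < t" unfolding t_def by simp
  ultimately have "t\<^sup>2 \<le> z\<^sup>2" by (simp add: power_mono)
  have "z\<^sup>2 < (2 * t)\<^sup>2" using \<open>z < 2 * t\<close> \<open>1 \<le> z\<close> by (intro power_strict_mono) simp_all
  with \<open>t\<^sup>2 \<le> z\<^sup>2\<close> have "2 * t\<^sup>2 + 2 * t + 1 \<le> real n" "real n < 2 * (2 * t)\<^sup>2 + 2 * (2 * t) + 1"
    unfolding n using \<open>t \<le> z\<close> \<open>z < 2 * t\<close> by linarith+
  then show ?thesis
    using real_n_seq[of m] real_n_seq[of "m + 1"] unfolding t_def by simp
qed

theorem theorem3: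
  fixes x :: "nat \<Rightarrow> real \<times> real" and n :: nat
  assumes "x 1 = (1/2, 1/2)"
    and "greedy_packing unit_square x"
    and "n \<ge> 5"
  defines "m \<equiv> nat \<lfloor>log 2 (sqrt (real n / 2 - 1/4) - 1/2)\<rfloor>"
  defines "\<gamma> \<equiv> (1::real) / 2 ^ m"
  defines "X \<equiv> x ` {1..n}"
  shows "(n = n_seq m \<longrightarrow>
            SR X = \<gamma> * sqrt 2 / 4 \<and> CR unit_square X = \<gamma> / 2 \<and> MR unit_square X = sqrt 2)
       \<and> (n_seq m < n \<and> n < k_seq m \<longrightarrow>
            SR X = \<gamma> / 4 \<and> CR unit_square X = \<gamma> / 2 \<and> MR unit_square X = 2)
       \<and> (n = k_seq m \<longrightarrow>
            SR X = \<gamma> / 4 \<and> CR unit_square X = \<gamma> * sqrt 2 / 4 \<and> MR unit_square X = sqrt 2)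
       \<and> (k_seq m < n \<and> n < n_seq (m + 1) \<longrightarrow>
            SR X = \<gamma> * sqrt 2 / 8 \<and> CR unit_square X = \<gamma> * sqrt 2 / 4 \<and> MR unit_square X = 2)"
proof -
  have bracket: "n_seq m \<le> n" "n < n_seq (m + 1)"
    using n_seq_floor_log_bracket[OF assms(3)] unfolding m_def by auto
  have N: "real (2 ^ (m + 1)) = 2 / \<gamma>" unfolding \<gamma>_def by simp
  have "\<gamma> > 0" unfolding \<gamma>_def by simp
  consider "n < k_seq m" | "k_seq m \<le> n" by linarith
  then show ?thesis
  proof cases
    case 1
    then show ?thesis
      using greedy_packing_radii_checkerboard_stage[OF assms(1,2) bracket(1) 1] bracket(1) \<open>\<gamma> > 0\<close>
      unfolding X_def[symmetric] MR_def N by (auto simp: field_simps)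
  next
    case 2
    then show ?thesis
      using greedy_packing_radii_lattice_stage[OF assms(1,2) 2 bracket(2)] n_seq_less_k_seq[of m] \<open>\<gamma> > 0\<close>
      unfolding X_def[symmetric] MR_def N by (auto simp: field_simps)
  qed
qed

end
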